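(* Let $X$ be a finite-dimensional simplicial complex such that for all vertices $x,y$ of $X$, $\Sigma_x\subseteq\Sigma_y$ implies $x=y$. Then $X$ is simplicially isomorphic to $\mathcal{N}(\mathcal{N}(X))$.
   Context: For a vertex $x$ of $X$, $\Sigma_x$ is the collection of maximal simplices of $X$ containing $x$. A maximal simplex of a simplicial complex $Y$ is a maximal collection of vertices such that every finite subset is a simplex of $Y$. For a simplicial complex $Y$, $\mathcal{N}(Y)$ is the nerve of the collection of maximal simplices of $Y$: its vertices are the maximal simplices of $Y$, and a finite set of them is a simplex iff their common intersection is non-empty. *)

theory Defs
  imports Main
begin

definition simplicial_complex :: "'a set set \<Rightarrow> bool" where
  "simplicial_complex K \<longleftrightarrow>
     (\<forall>\<sigma>\<in>K. finite \<sigma> \<and> \<sigma> \<noteq> {}) \<and>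
     (\<forall>\<sigma>\<in>K. \<forall>\<tau>. \<tau> \<subseteq> \<sigma> \<and> \<tau> \<noteq> {} \<longrightarrow> \<tau> \<in> K)"

definition vertices :: "'a set set \<Rightarrow> 'a set" where
  "vertices K = \<Union>K"

definition finite_dimensional :: "'a set set \<Rightarrow> bool" where
  "finite_dimensional K \<longleftrightarrow> (\<exists>n::nat. \<forall>\<sigma>\<in>K. card \<sigma> \<le> n)"

definition clique :: "'a set set \<Rightarrow> 'a set \<Rightarrow> bool" where
  "clique K M \<longleftrightarrow> M \<subseteq> vertices K \<and>
     (\<forall>F. F \<subseteq> M \<and> finite F \<and> F \<noteq> {} \<longrightarrow> F \<in> K)"

definition max_simplex :: "'a set set \<Rightarrow> 'a set \<Rightarrow> bool" where
  "max_simplex K M \<longleftrightarrow> clique K M \<and> (\<forall>M'. clique K M' \<and> M \<subseteq> M' \<longrightarrow> M' = M)"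

definition Sigma_v :: "'a set set \<Rightarrow> 'a \<Rightarrow> 'a set set" where
  "Sigma_v K x = {M. max_simplex K M \<and> x \<in> M}"

definition nerve :: "'a set set \<Rightarrow> 'a set set set" where
  "nerve K = {S. finite S \<and> S \<noteq> {} \<and> (\<forall>M\<in>S. max_simplex K M) \<and> \<Inter>S \<noteq> {}}"

definition simplicial_iso :: "'a set set \<Rightarrow> 'b set set \<Rightarrow> ('a \<Rightarrow> 'b) \<Rightarrow> bool" where
  "simplicial_iso K L f \<longleftrightarrow> bij_betw f (vertices K) (vertices L) \<and>
     (\<forall>\<sigma>. \<sigma> \<subseteq> vertices K \<longrightarrow> (\<sigma> \<in> K \<longleftrightarrow> f ` \<sigma> \<in> L))"

end

theory Submission
  imports Defs
begin

text \<open>Bounded dimension makes every clique a finite simplex, so every simplex lies in a maximal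
  simplex and maximal simplices are finite. A maximal simplex \<open>C\<close> of \<open>\<N>(X)\<close> is a family of
  finite sets whose finite subfamilies meet, hence the whole family meets in some vertex \<open>z\<close>;
  then \<open>C \<subseteq> \<Sigma>\<^sub>z\<close>, and as \<open>\<Sigma>\<^sub>z\<close> is a clique of \<open>\<N>(X)\<close>, \<open>C = \<Sigma>\<^sub>z\<close>.
  Under the hypothesis, \<open>x \<mapsto> \<Sigma>\<^sub>x\<close> is injective and every \<open>\<Sigma>\<^sub>x\<close> is maximal, so it is
  a bijection onto the vertices of \<open>\<N>(\<N>(X))\<close>; and the \<open>\<Sigma>\<^sub>x\<close> for \<open>x \<in> \<sigma>\<close> meet iff some
  maximal simplex contains \<open>\<sigma>\<close>, i.e. iff \<open>\<sigma> \<in> X\<close>.\<close>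

lemma simplex_imp_clique:
  assumes "simplicial_complex X" and "\<sigma> \<in> X"
  shows "clique X \<sigma>"
  using assms unfolding simplicial_complex_def clique_def vertices_def by blast

lemma clique_card_le:
  assumes bound: "\<forall>\<sigma>\<in>X. card \<sigma> \<le> n" and M: "clique X M"
  shows "finite M" and "card M \<le> n"
proof -
  show fin: "finite M"
  proof (rule ccontr)
    assume "infinite M"
    then obtain F where F: "F \<subseteq> M" "finite F" "card F = Suc n"
      using infinite_arbitrarily_large by blast
    then have "F \<noteq> {}" by auto
    with F M have "F \<in> X" unfolding clique_def by blast
    with bound F show False by auto
  qed
  show "card M \<le> n"
  proof (cases "M = {}")
    case False
    with fin M have "M \<in> X" unfolding clique_def by blast
    with bound show ?thesis by blast
  qed simp
qed

lemma finite_dimensional_clique_finite: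
  assumes "finite_dimensional X" and "clique X M"
  shows "finite M"
  using assms clique_card_le(1) unfolding finite_dimensional_def by blast

lemma max_simplex_in_complex:
  assumes "finite_dimensional X" and "max_simplex X M" and "M \<noteq> {}"
  shows "M \<in> X"
  using assms finite_dimensional_clique_finite unfolding max_simplex_def clique_def by blast

lemma clique_imp_subset_max_simplex:
  assumes "finite_dimensional X" and \<sigma>: "clique X \<sigma>"
  shows "\<exists>M. max_simplex X M \<and> \<sigma> \<subseteq> M"
proof -
  obtain n where bound: "\<forall>\<sigma>\<in>X. card \<sigma> \<le> n"
    using assms(1) unfolding finite_dimensional_def by blast
  let ?P = "\<lambda>M. clique X M \<and> \<sigma> \<subseteq> M"
  have "\<forall>M. ?P M \<longrightarrow> card M < Suc n"
    using clique_card_le(2)[OF bound] le_imp_less_Suc by blast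
  then obtain M where M: "?P M" and largest: "\<forall>M'. ?P M' \<longrightarrow> card M' \<le> card M"
    using ex_has_greatest_nat[of ?P \<sigma> card "Suc n"] \<sigma> by auto
  have "M' = M" if M': "clique X M'" "M \<subseteq> M'" for M'
  proof -
    have "card M' \<le> card M" using largest M M' by auto
    with card_seteq[OF clique_card_le(1)[OF bound M'(1)] M'(2)] show ?thesis by simp
  qed
  with M show ?thesis unfolding max_simplex_def by auto
qed

lemma simplex_iff_subset_max_simplex:
  assumes "simplicial_complex X" and "finite_dimensional X"
  shows "\<sigma> \<in> X \<longleftrightarrow> finite \<sigma> \<and> \<sigma> \<noteq> {} \<and> (\<exists>M. max_simplex X M \<and> \<sigma> \<subseteq> M)"
proof
  assume \<sigma>: "\<sigma> \<in> X"
  then have "finite \<sigma> \<and> \<sigma> \<noteq> {}"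
    using assms(1) unfolding simplicial_complex_def by blast
  with clique_imp_subset_max_simplex[OF assms(2) simplex_imp_clique[OF assms(1) \<sigma>]]
  show "finite \<sigma> \<and> \<sigma> \<noteq> {} \<and> (\<exists>M. max_simplex X M \<and> \<sigma> \<subseteq> M)" by blast
next
  assume "finite \<sigma> \<and> \<sigma> \<noteq> {} \<and> (\<exists>M. max_simplex X M \<and> \<sigma> \<subseteq> M)"
  then obtain M where "clique X M" "\<sigma> \<subseteq> M" "finite \<sigma>" "\<sigma> \<noteq> {}"
    unfolding max_simplex_def by blast
  then show "\<sigma> \<in> X" unfolding clique_def by blast
qed

text \<open>A finite intersection property: it suffices that one member of the family is finite,
  because a finite subfamily with the smallest intersection already realises \<open>\<Inter>C\<close>.\<close>

lemma Inter_ne_if_finite_subfamilies: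
  assumes M: "M \<in> C" "finite M"
    and meet: "\<And>S. finite S \<Longrightarrow> S \<noteq> {} \<Longrightarrow> S \<subseteq> C \<Longrightarrow> \<Inter>S \<noteq> {}"
  shows "\<Inter>C \<noteq> {}"
proof -
  let ?P = "\<lambda>S. finite S \<and> S \<subseteq> C \<and> M \<in> S"
  obtain S where S: "?P S" and smallest: "\<forall>S'. ?P S' \<longrightarrow> card (\<Inter>S) \<le> card (\<Inter>S')"
    using ex_has_least_nat[of ?P "{M}" "\<lambda>S. card (\<Inter>S)"] M by auto
  have "\<Inter>S \<subseteq> N" if N: "N \<in> C" for N
  proof -
    have "finite (\<Inter>S)" using S M by (meson Inter_lower finite_subset)
    moreover have "card (\<Inter>S) \<le> card (\<Inter>(insert N S))"
      using smallest[rule_format, of "insert N S"] S N by simp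
    ultimately have "\<Inter>(insert N S) = \<Inter>S" by (simp add: card_seteq)
    then show ?thesis by auto
  qed
  moreover have "\<Inter>S \<noteq> {}" using meet S by blast
  ultimately show ?thesis by blast
qed

lemma vertices_nerve: "vertices (nerve X) = {M. max_simplex X M \<and> M \<noteq> {}}"
proof
  show "{M. max_simplex X M \<and> M \<noteq> {}} \<subseteq> vertices (nerve X)"
  proof
    fix M assume "M \<in> {M. max_simplex X M \<and> M \<noteq> {}}"
    then have "{M} \<in> nerve X" unfolding nerve_def by auto
    then show "M \<in> vertices (nerve X)" unfolding vertices_def by blast
  qed
qed (auto simp: vertices_def nerve_def)

lemma clique_nerve_Sigma_v: "clique (nerve X) (Sigma_v X x)"
  unfolding clique_def vertices_nerve by (auto simp: Sigma_v_def nerve_def)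

lemma Sigma_v_ne:
  assumes "simplicial_complex X" and "finite_dimensional X" and "x \<in> vertices X"
  shows "Sigma_v X x \<noteq> {}"
proof -
  obtain \<sigma> where "\<sigma> \<in> X" "x \<in> \<sigma>" using assms(3) unfolding vertices_def by blast
  then show ?thesis
    using assms simplex_iff_subset_max_simplex unfolding Sigma_v_def by blast
qed

lemma clique_nerve_subset_Sigma_v:
  assumes fd: "finite_dimensional X" and C: "clique (nerve X) C" "C \<noteq> {}"
  shows "\<exists>z\<in>vertices X. C \<subseteq> Sigma_v X z"
proof -
  have max: "\<forall>M\<in>C. max_simplex X M \<and> M \<noteq> {}"
    using C vertices_nerve unfolding clique_def by blast
  obtain M where M: "M \<in> C" using C by blast
  have "\<Inter>C \<noteq> {}"
  proof (rule Inter_ne_if_finite_subfamilies[OF M])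
    show "finite M"
      using fd max M finite_dimensional_clique_finite unfolding max_simplex_def by blast
  qed (use C in \<open>auto simp: clique_def nerve_def\<close>)
  then obtain z where z: "z \<in> \<Inter>C" by blast
  have "M \<in> X" using max_simplex_in_complex fd max M by blast
  then have "z \<in> vertices X" using z M unfolding vertices_def by blast
  moreover have "C \<subseteq> Sigma_v X z" using z max unfolding Sigma_v_def by blast
  ultimately show ?thesis by blast
qed

lemma max_simplex_nerve_iff_Sigma_v:
  assumes sc: "simplicial_complex X" and fd: "finite_dimensional X"
    and sep: "\<forall>x\<in>vertices X. \<forall>y\<in>vertices X. Sigma_v X x \<subseteq> Sigma_v X y \<longrightarrow> x = y"
  shows "max_simplex (nerve X) C \<and> C \<noteq> {} \<longleftrightarrow> (\<exists>x\<in>vertices X. C = Sigma_v X x)"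
proof
  assume C: "max_simplex (nerve X) C \<and> C \<noteq> {}"
  then obtain z where z: "z \<in> vertices X" "C \<subseteq> Sigma_v X z"
    using clique_nerve_subset_Sigma_v[OF fd] unfolding max_simplex_def by blast
  have "\<forall>C'. clique (nerve X) C' \<and> C \<subseteq> C' \<longrightarrow> C' = C"
    using C unfolding max_simplex_def by blast
  then have "Sigma_v X z = C"
    using clique_nerve_Sigma_v[of X z] z(2) by blast
  with z(1) show "\<exists>x\<in>vertices X. C = Sigma_v X x" by blast
next
  assume "\<exists>x\<in>vertices X. C = Sigma_v X x"
  then obtain x where x: "x \<in> vertices X" and C: "C = Sigma_v X x" by blast
  have "C' = C" if C': "clique (nerve X) C'" "C \<subseteq> C'" for C'
  proof -
    have "C' \<noteq> {}" using C'(2) C Sigma_v_ne[OF sc fd x] by blast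
    then obtain z where "z \<in> vertices X" "C' \<subseteq> Sigma_v X z"
      using clique_nerve_subset_Sigma_v[OF fd C'(1)] by blast
    with sep x C C'(2) show ?thesis by blast
  qed
  moreover have "clique (nerve X) C" "C \<noteq> {}"
    using C clique_nerve_Sigma_v[of X x] Sigma_v_ne[OF sc fd x] by simp_all
  ultimately show "max_simplex (nerve X) C \<and> C \<noteq> {}"
    unfolding max_simplex_def by blast
qed

lemma Inter_image_Sigma_v:
  "\<sigma> \<noteq> {} \<Longrightarrow> \<Inter>(Sigma_v X ` \<sigma>) = {M. max_simplex X M \<and> \<sigma> \<subseteq> M}"
  unfolding Sigma_v_def by blast

theorem theorem3p1:
  fixes X :: "'a set set"
  assumes "simplicial_complex X"
    and "finite_dimensional X"
    and "\<forall>x\<in>vertices X. \<forall>y\<in>vertices X. Sigma_v X x \<subseteq> Sigma_v X y \<longrightarrow> x = y"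
  shows "\<exists>f. simplicial_iso X (nerve (nerve X)) f"
proof -
  let ?\<Sigma> = "Sigma_v X"
  have max_iff: "max_simplex (nerve X) C \<and> C \<noteq> {} \<longleftrightarrow> (\<exists>x\<in>vertices X. C = ?\<Sigma> x)" for C
    using max_simplex_nerve_iff_Sigma_v[OF assms] .
  have inj: "inj_on ?\<Sigma> (vertices X)"
    using assms(3) unfolding inj_on_def by blast
  have "vertices (nerve (nerve X)) = ?\<Sigma> ` vertices X"
    unfolding vertices_nerve[of "nerve X"] using max_iff by blast
  with inj have bij: "bij_betw ?\<Sigma> (vertices X) (vertices (nerve (nerve X)))"
    by (simp add: bij_betw_def)
  have "\<sigma> \<in> X \<longleftrightarrow> ?\<Sigma> ` \<sigma> \<in> nerve (nerve X)" if \<sigma>: "\<sigma> \<subseteq> vertices X" for \<sigma>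
  proof (cases "\<sigma> = {}")
    case True
    then show ?thesis
      using simplex_iff_subset_max_simplex[OF assms(1,2), of \<sigma>] by (simp add: nerve_def)
  next
    case False
    have "finite (?\<Sigma> ` \<sigma>) \<longleftrightarrow> finite \<sigma>"
      using finite_image_iff inj_on_subset[OF inj \<sigma>] by blast
    moreover have "\<forall>C\<in>?\<Sigma> ` \<sigma>. max_simplex (nerve X) C"
      using max_iff \<sigma> by blast
    ultimately show ?thesis
      using simplex_iff_subset_max_simplex[OF assms(1,2), of \<sigma>] Inter_image_Sigma_v[OF False, of X] False
      unfolding nerve_def by simp
  qed
  with bij show ?thesis unfolding simplicial_iso_def by blast
qed

end
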